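(* Assume the Margin assumption with $y_*\in\mathbb{R}^d_+$, Boundedness, and that the selection $v$ satisfies $v(y)\in\mathbb{R}^d_+$ for all $y\in\mathbb{R}^d_+$. For agents $A_0,\dots,A_T\in\mathcal{A}$, let $(y_t,b_t)$ be generated by the projected strategic perceptron with $\mathbb{L}=\mathbb{R}^d_+\times\mathbb{R}$ and $\gamma=1$. Then $$\sum_{t\in\mathcal{M}_T}L_{\mathrm{hinge}}\Big(\big(\tfrac{y_*}{d_*\|y_*\|_*},\tfrac{b_*}{d_*\|y_*\|_*}\big);(s(A_t,y_t,b_t),1),\ell(A_t)\Big)\le0,$$ and consequently $$|\mathcal{M}_T|\le\frac{(\|y_*\|_2^2+b_*^2)(\widetilde D^2+1)}{\|y_*\|_*^2\,d_*^2}.$$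
   Context: Setting: $\mathcal{A}\subseteq\mathbb{R}^d$, labels $\ell(A)\in\{\pm1\}$; $\operatorname{sign}(0)=+1$; norm $\|\cdot\|$ with dual $\|y\|_*=\max_{\|w\|\le1}y^\top w$; constant $c>0$; a fixed selection $v$ with $v(0)=0$ and $v(y)\in\arg\max_{\|w\|\le1}y^\top w$ for $y\ne0$, with $v(\lambda y)=v(y)$ for $\lambda>0$. Predicted label $\hat\ell(x,y,b)=\operatorname{sign}(y^\top x+b-2\|y\|_*/c)$. Response: for $y\ne0$, $r(A,y,b)=A+(\tfrac2c-\tfrac{y^\top A+b}{\|y\|_*})v(y)$ if $0\le\tfrac{y^\top A+b}{\|y\|_*}<\tfrac2c$, else $A$. Proxy: for $y\ne0$, $s(A,y,b)=A-\tfrac{y^\top A+b}{\|y\|_*}v(y)$ if $0\le\tfrac{y^\top A+b}{\|y\|_*}<\tfrac2c$ and $\ell(A)=-1$; $=A+(\tfrac2c-\tfrac{y^\top A+b}{\|y\|_*})v(y)$ if the range condition holds and $\ell(A)=+1$; $=A$ otherwise; $r(A,0,b)=s(A,0,b)=A$. Margin assumption: $d_*:=\max_{y\ne0,b}\min_{A\in\mathcal{A}}\ell(A)\frac{y^\top A+b}{\|y\|_*}$ attained at $(y_*,b_* )$, $y_*\ne0$, $d_*>0$. Boundedness: $D:=\sup_{A\in\mathcal{A}}\|A\|_2<\infty$; $C_{\|\cdot\|}=\max_y\|v(y)\|_2$; $\widetilde D=D+\tfrac2cC_{\|\cdot\|}$. Hinge loss $L_{\mathrm{hinge}}(q;\xi,\ell)=\max\{0,1-\ell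 q^\top\xi\}$. Projected strategic perceptron with closed convex cone $\mathbb{L}$ and stepsize $\gamma$: $q_0=(y_0,b_0)=(0,0)$; for $t=0,\dots,T$: agent $A_t$ is shown $(y_t,b_t)$, responds $r(A_t,y_t,b_t)$, is predicted $\hat\ell(r(A_t,y_t,b_t),y_t,b_t)$; with $\xi_t=(s(A_t,y_t,b_t),1)$, $z_{t+1}=q_t+\gamma\ell(A_t)\xi_t$ on a mistake, else $z_{t+1}=q_t$; $q_{t+1}=(y_{t+1},b_{t+1})=\Pi_{\mathbb{L}}(z_{t+1})$ (Euclidean projection). Mistake set $\mathcal{M}_T=\{t\in\{0,\dots,T\}:\hat\ell(r(A_t,y_t,b_t),y_t,b_t)\ne\ell(A_t)\}$. *)

theory Defs
  imports "HOL-Analysis.Analysis"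
begin

definition is_norm_fun :: "(real ^ 'd \<Rightarrow> real) \<Rightarrow> bool" where
  "is_norm_fun nrm \<longleftrightarrow>
     (\<forall>x y. nrm (x + y) \<le> nrm x + nrm y) \<and>
     (\<forall>a x. nrm (a *\<^sub>R x) = \<bar>a\<bar> * nrm x) \<and>
     (\<forall>x. nrm x = 0 \<longleftrightarrow> x = 0)"

definition dual_norm :: "(real ^ 'd \<Rightarrow> real) \<Rightarrow> real ^ 'd \<Rightarrow> real" where
  "dual_norm nrm y = (SUP w\<in>{w. nrm w \<le> 1}. y \<bullet> w)"

definition is_selection :: "(real ^ 'd \<Rightarrow> real) \<Rightarrow> (real ^ 'd \<Rightarrow> real ^ 'd) \<Rightarrow> bool" where
  "is_selection nrm v \<longleftrightarrow>
     v 0 = 0 \<and>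
     (\<forall>y. y \<noteq> 0 \<longrightarrow> nrm (v y) \<le> 1 \<and> y \<bullet> v y = dual_norm nrm y) \<and>
     (\<forall>y (a::real). a > 0 \<longrightarrow> v (a *\<^sub>R y) = v y)"

definition sgn1 :: "real \<Rightarrow> real" where
  "sgn1 x = (if x \<ge> 0 then 1 else -1)"

definition pred_label :: "(real ^ 'd \<Rightarrow> real) \<Rightarrow> real \<Rightarrow> real ^ 'd \<Rightarrow> real ^ 'd \<Rightarrow> real \<Rightarrow> real" where
  "pred_label nrm c x y b = sgn1 (y \<bullet> x + b - 2 * dual_norm nrm y / c)"

definition response :: "(real ^ 'd \<Rightarrow> real) \<Rightarrow> real \<Rightarrow> (real ^ 'd \<Rightarrow> real ^ 'd)
    \<Rightarrow> real ^ 'd \<Rightarrow> real ^ 'd \<Rightarrow> real \<Rightarrow> real ^ 'd" where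
  "response nrm c v A y b =
     (if y = 0 then A
      else (let u = (y \<bullet> A + b) / dual_norm nrm y in
            if 0 \<le> u \<and> u < 2 / c then A + (2 / c - u) *\<^sub>R v y else A))"

definition proxy :: "(real ^ 'd \<Rightarrow> real) \<Rightarrow> real \<Rightarrow> (real ^ 'd \<Rightarrow> real ^ 'd)
    \<Rightarrow> (real ^ 'd \<Rightarrow> real) \<Rightarrow> real ^ 'd \<Rightarrow> real ^ 'd \<Rightarrow> real \<Rightarrow> real ^ 'd" where
  "proxy nrm c v lab A y b =
     (if y = 0 then A
      else (let u = (y \<bullet> A + b) / dual_norm nrm y in
            if 0 \<le> u \<and> u < 2 / c \<and> lab A = -1 then A - u *\<^sub>R v y
            else if 0 \<le> u \<and> u < 2 / c \<and> lab A = 1 then A + (2 / c - u) *\<^sub>R v y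
            else A))"

definition is_mistake :: "(real ^ 'd \<Rightarrow> real) \<Rightarrow> real \<Rightarrow> (real ^ 'd \<Rightarrow> real ^ 'd)
    \<Rightarrow> (real ^ 'd \<Rightarrow> real) \<Rightarrow> real ^ 'd \<Rightarrow> (real ^ 'd) \<times> real \<Rightarrow> bool" where
  "is_mistake nrm c v lab A q =
     (pred_label nrm c (response nrm c v A (fst q) (snd q)) (fst q) (snd q) \<noteq> lab A)"

primrec perceptron :: "(real ^ 'd \<Rightarrow> real) \<Rightarrow> real \<Rightarrow> (real ^ 'd \<Rightarrow> real ^ 'd)
    \<Rightarrow> (real ^ 'd \<Rightarrow> real) \<Rightarrow> ((real ^ 'd) \<times> real) set \<Rightarrow> real \<Rightarrow> (nat \<Rightarrow> real ^ 'd)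
    \<Rightarrow> nat \<Rightarrow> (real ^ 'd) \<times> real" where
  "perceptron nrm c v lab L \<gamma> A 0 = (0, 0)"
| "perceptron nrm c v lab L \<gamma> A (Suc t) =
     (let q = perceptron nrm c v lab L \<gamma> A t;
          \<xi> = (proxy nrm c v lab (A t) (fst q) (snd q), 1 :: real);
          z = (if is_mistake nrm c v lab (A t) q then q + (\<gamma> * lab (A t)) *\<^sub>R \<xi> else q)
      in closest_point L z)"

definition mistake_set :: "(real ^ 'd \<Rightarrow> real) \<Rightarrow> real \<Rightarrow> (real ^ 'd \<Rightarrow> real ^ 'd)
    \<Rightarrow> (real ^ 'd \<Rightarrow> real) \<Rightarrow> ((real ^ 'd) \<times> real) set \<Rightarrow> real \<Rightarrow> (nat \<Rightarrow> real ^ 'd)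
    \<Rightarrow> nat \<Rightarrow> nat set" where
  "mistake_set nrm c v lab L \<gamma> A T =
     {t \<in> {0..T}. is_mistake nrm c v lab (A t) (perceptron nrm c v lab L \<gamma> A t)}"

definition hinge :: "(real ^ 'd) \<times> real \<Rightarrow> (real ^ 'd) \<times> real \<Rightarrow> real \<Rightarrow> real" where
  "hinge q \<xi> l = max 0 (1 - l * (q \<bullet> \<xi>))"

definition nonneg_orthant :: "(real ^ 'd) set" where
  "nonneg_orthant = {y. \<forall>i. 0 \<le> y $ i}"

definition margin_of :: "(real ^ 'd \<Rightarrow> real) \<Rightarrow> (real ^ 'd \<Rightarrow> real) \<Rightarrow> (real ^ 'd) set
    \<Rightarrow> real ^ 'd \<Rightarrow> real \<Rightarrow> real" where
  "margin_of nrm lab \<A> y b = (INF A\<in>\<A>. lab A * (y \<bullet> A + b) / dual_norm nrm y)"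

end

(*
  The proxy s(A, y, b) is built so that the classical perceptron argument applies to the feature
  vectors (s, 1). On a mistake, the current hypothesis (y, b) scores the proxy with the wrong sign.
  The proxy only moves an agent along v(y), in the direction of its true label, and both v(y) and
  the optimal direction lie in the nonnegative orthant; hence the optimal classifier, scaled by
  1 / (d * dual norm of its direction), keeps margin at least 1 on every proxy, which is the
  hinge-loss claim. Projection onto the closed convex cone R^d_+ x R never decreases the inner
  product with that classifier nor increases the norm, so the usual potential argument (the inner
  product grows by 1 and the squared norm by at most D~^2 + 1 per mistake) together with
  Cauchy-Schwarz bounds the number of mistakes.
*)
theory Submission imports Defs begin

lemma is_norm_fun_basic:
  assumes "is_norm_fun nrm"
  shows is_norm_fun_zero: "nrm 0 = 0"
    and is_norm_fun_nonneg: "nrm x \<ge> 0"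
proof -
  have hom: "\<And>a x. nrm (a *\<^sub>R x) = \<bar>a\<bar> * nrm x" and tri: "\<And>x y. nrm (x + y) \<le> nrm x + nrm y"
    using assms unfolding is_norm_fun_def by auto
  show zero: "nrm 0 = 0" using hom[of 0 0] by simp
  have "nrm (- x) = nrm x" using hom[of "-1" x] by simp
  then show "nrm x \<ge> 0" using tri[of x "- x"] zero by simp
qed

lemma is_norm_fun_convex:
  assumes "is_norm_fun nrm"
  shows "convex_on UNIV nrm"
proof
  have hom: "\<And>a x. nrm (a *\<^sub>R x) = \<bar>a\<bar> * nrm x" and tri: "\<And>x y. nrm (x + y) \<le> nrm x + nrm y"
    using assms unfolding is_norm_fun_def by auto
  fix t :: real and x y assume "t > 0" "t < 1"
  then show "nrm ((1 - t) *\<^sub>R x + t *\<^sub>R y) \<le> (1 - t) * nrm x + t * nrm y"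
    using tri[of "(1 - t) *\<^sub>R x" "t *\<^sub>R y"] by (simp add: hom)
qed simp

lemma is_norm_fun_lower_bound:
  fixes nrm :: "real ^ 'd \<Rightarrow> real"
  assumes "is_norm_fun nrm"
  obtains k where "k > 0" "\<And>x. k * norm x \<le> nrm x"
proof -
  have hom: "\<And>a x. nrm (a *\<^sub>R x) = \<bar>a\<bar> * nrm x" and pos: "\<And>x. nrm x = 0 \<longleftrightarrow> x = 0"
    using assms unfolding is_norm_fun_def by auto
  have cont: "continuous_on UNIV nrm"
    by (rule convex_on_continuous[OF open_UNIV is_norm_fun_convex[OF assms]])
  have "sphere (0 :: real ^ 'd) 1 \<noteq> {}"
    using norm_axis_1[of undefined] by (metis mem_sphere_0 empty_iff)
  then obtain p where p: "p \<in> sphere 0 1" "\<And>x. x \<in> sphere 0 1 \<Longrightarrow> nrm p \<le> nrm x"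
    using continuous_attains_inf[OF compact_sphere _ continuous_on_subset[OF cont]] by blast
  have "nrm p > 0"
    using p(1) pos[of p] is_norm_fun_nonneg[OF assms, of p] by fastforce
  moreover have "nrm p * norm x \<le> nrm x" for x
  proof (cases "x = 0")
    case False
    have "nrm p \<le> nrm (inverse (norm x) *\<^sub>R x)" using p(2) False by simp
    then show ?thesis using False by (simp add: hom field_simps)
  qed (simp add: is_norm_fun_zero[OF assms])
  ultimately show thesis by (rule that)
qed

lemma is_norm_fun_unit_ball_bounded:
  fixes nrm :: "real ^ 'd \<Rightarrow> real"
  assumes "is_norm_fun nrm"
  shows "bounded {w. nrm w \<le> 1}"
proof -
  obtain k where k: "k > 0" "\<And>x. k * norm x \<le> nrm x"
    using is_norm_fun_lower_bound[OF assms] by blast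
  have "norm w \<le> 1 / k" if "nrm w \<le> 1" for w
    using k order_trans[OF k(2) that] by (simp add: field_simps)
  then show ?thesis unfolding bounded_iff by blast
qed

lemma dual_norm_zero:
  assumes "is_norm_fun nrm"
  shows "dual_norm nrm 0 = 0"
proof -
  have "0 \<in> {w. nrm w \<le> 1}" using is_norm_fun_zero[OF assms] by simp
  then have "{w. nrm w \<le> 1} \<noteq> {}" by blast
  then show ?thesis unfolding dual_norm_def by simp
qed

lemma dual_norm_pos:
  fixes nrm :: "real ^ 'd \<Rightarrow> real"
  assumes "is_norm_fun nrm" "y \<noteq> 0"
  shows "dual_norm nrm y > 0"
proof -
  have hom: "\<And>a x. nrm (a *\<^sub>R x) = \<bar>a\<bar> * nrm x" and pos: "\<And>x. nrm x = 0 \<longleftrightarrow> x = 0"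
    using assms(1) unfolding is_norm_fun_def by auto
  have ny: "nrm y > 0" using pos[of y] is_norm_fun_nonneg[OF assms(1), of y] assms(2) by linarith
  have bdd: "bdd_above ((\<lambda>w. y \<bullet> w) ` {w. nrm w \<le> 1})"
    by (intro bounded_imp_bdd_above bounded_linear_image is_norm_fun_unit_ball_bounded assms(1)
        bounded_linear_inner_right)
  have "0 < y \<bullet> (inverse (nrm y) *\<^sub>R y)" using ny assms(2) by simp
  also have "\<dots> \<le> dual_norm nrm y"
    unfolding dual_norm_def using ny by (intro cSUP_upper bdd) (simp add: hom)
  finally show ?thesis .
qed

lemma selection_in_unit_ball:
  assumes "is_norm_fun nrm" "is_selection nrm v"
  shows "nrm (v y) \<le> 1"
  using assms is_norm_fun_zero[OF assms(1)] unfolding is_selection_def by (cases "y = 0") auto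

lemma selection_norm_bdd_above:
  fixes nrm :: "real ^ 'd \<Rightarrow> real"
  assumes "is_norm_fun nrm" "is_selection nrm v"
  shows "bdd_above (range (\<lambda>y. norm (v y)))"
proof -
  obtain R where "\<And>w. nrm w \<le> 1 \<Longrightarrow> norm w \<le> R"
    using is_norm_fun_unit_ball_bounded[OF assms(1)] unfolding bounded_iff by blast
  then show ?thesis using selection_in_unit_ball[OF assms] by (intro bdd_aboveI2) blast
qed

lemma response_score:
  fixes nrm :: "real ^ 'd \<Rightarrow> real" and A :: "real ^ 'd" and b :: real
  assumes "is_norm_fun nrm" "is_selection nrm v" "y \<noteq> 0"
  defines "u \<equiv> (y \<bullet> A + b) / dual_norm nrm y"
  shows "y \<bullet> response nrm c v A y b + b =
           (if 0 \<le> u \<and> u < 2 / c then 2 / c * dual_norm nrm y else y \<bullet> A + b)"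
proof -
  have "y \<bullet> v y = dual_norm nrm y" using assms(2,3) unfolding is_selection_def by simp
  moreover have "u * dual_norm nrm y = y \<bullet> A + b"
    using dual_norm_pos[OF assms(1,3)] unfolding u_def by simp
  ultimately show ?thesis
    using assms(3) unfolding response_def u_def[symmetric] by (simp add: inner_add_right algebra_simps)
qed

lemma proxy_score:
  fixes nrm :: "real ^ 'd \<Rightarrow> real" and A :: "real ^ 'd" and b :: real
  assumes "is_norm_fun nrm" "is_selection nrm v" "y \<noteq> 0"
  defines "u \<equiv> (y \<bullet> A + b) / dual_norm nrm y"
  shows "y \<bullet> proxy nrm c v lab A y b + b =
           (if 0 \<le> u \<and> u < 2 / c \<and> lab A = -1 then 0
            else if 0 \<le> u \<and> u < 2 / c \<and> lab A = 1 then 2 / c * dual_norm nrm y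
            else y \<bullet> A + b)"
proof -
  have "y \<bullet> v y = dual_norm nrm y" using assms(2,3) unfolding is_selection_def by simp
  moreover have "u * dual_norm nrm y = y \<bullet> A + b"
    using dual_norm_pos[OF assms(1,3)] unfolding u_def by simp
  ultimately show ?thesis
    using assms(3) unfolding proxy_def u_def[symmetric]
    by (simp add: inner_add_right inner_diff_right algebra_simps)
qed

lemma mistake_proxy_score_nonpos:
  fixes nrm :: "real ^ 'd \<Rightarrow> real"
  assumes norm: "is_norm_fun nrm" and sel: "is_selection nrm v" and c: "c > 0"
    and lab: "lab A = 1 \<or> lab A = -1"
    and mistake: "is_mistake nrm c v lab A (y, b)"
  shows "lab A * ((y, b) \<bullet> (proxy nrm c v lab A y b, 1)) \<le> 0"
proof -
  \<comment> \<open>An agent inside the manipulation band is moved exactly onto the boundary and predicted \<open>+1\<close>,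
    so a mistake there forces \<open>lab A = -1\<close>, whose proxy lies on the hyperplane \<open>y \<bullet> x + b = 0\<close>.\<close>
  have mis: "sgn1 (y \<bullet> response nrm c v A y b + b - 2 * dual_norm nrm y / c) \<noteq> lab A"
    using mistake unfolding is_mistake_def pred_label_def by simp
  show ?thesis
  proof (cases "y = 0")
    case True
    then show ?thesis
      using mis lab dual_norm_zero[OF norm] unfolding response_def proxy_def sgn1_def by (auto split: if_splits)
  next
    case False
    define dn where "dn = dual_norm nrm y"
    have dn: "dn > 0" unfolding dn_def using dual_norm_pos[OF norm False] .
    have range_iff: "(0 \<le> (y \<bullet> A + b) / dn) = (0 \<le> y \<bullet> A + b)"
      "((y \<bullet> A + b) / dn < 2 / c) = (y \<bullet> A + b < 2 / c * dn)"
      using dn by (simp_all add: zero_le_divide_iff divide_less_eq)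
    have "2 / c * dn > 0" using c dn by simp
    then show ?thesis
      using mis lab response_score[OF norm sel False, where A=A and b=b and c=c]
        proxy_score[OF norm sel False, where A=A and b=b and c=c and lab=lab]
      unfolding dn_def[symmetric] range_iff sgn1_def by (auto split: if_splits)
  qed
qed

lemma proxy_score_mono:
  assumes "lab A = 1 \<or> lab A = -1" "ys \<bullet> v y \<ge> 0"
  shows "lab A * (ys \<bullet> A + bs) \<le> lab A * (ys \<bullet> proxy nrm c v lab A y b + bs)"
proof -
  define u where "u = (y \<bullet> A + b) / dual_norm nrm y"
  consider "y = 0 \<or> \<not> (0 \<le> u \<and> u < 2 / c)" | "0 \<le> u \<and> u < 2 / c" "lab A = -1"
    | "0 \<le> u \<and> u < 2 / c" "lab A = 1"
    using assms(1) by blast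
  then show ?thesis
  proof cases
    case 1
    then show ?thesis unfolding proxy_def u_def[symmetric] by auto
  next
    case 2
    then have "y \<noteq> 0 \<Longrightarrow> 0 \<le> u * (ys \<bullet> v y)" using assms(2) by simp
    then show ?thesis using 2 unfolding proxy_def u_def[symmetric] by (auto simp: inner_diff_right)
  next
    case 3
    then have "y \<noteq> 0 \<Longrightarrow> 0 \<le> (2 / c - u) * (ys \<bullet> v y)" using assms(2) by simp
    then show ?thesis using 3 unfolding proxy_def u_def[symmetric] by (auto simp: inner_add_right)
  qed
qed

lemma proxy_norm_le:
  assumes "c > 0" "\<And>y. norm (v y) \<le> C"
  shows "norm (proxy nrm c v lab A y b) \<le> norm A + 2 / c * C"
proof -
  have shift: "norm (A + w *\<^sub>R v y) \<le> norm A + 2 / c * C" if "\<bar>w\<bar> \<le> 2 / c" for w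
  proof -
    have "norm (A + w *\<^sub>R v y) \<le> norm A + \<bar>w\<bar> * norm (v y)"
      using norm_triangle_ineq[of A "w *\<^sub>R v y"] by simp
    also have "\<bar>w\<bar> * norm (v y) \<le> 2 / c * C"
      using that assms by (intro mult_mono) auto
    finally show ?thesis by simp
  qed
  let ?p = "proxy nrm c v lab A y b"
  have "?p = A + 0 *\<^sub>R v y \<or>
        (\<exists>u. 0 \<le> u \<and> u < 2 / c \<and> (?p = A + (- u) *\<^sub>R v y \<or> ?p = A + (2 / c - u) *\<^sub>R v y))"
    unfolding proxy_def Let_def by auto
  then show ?thesis
  proof (elim disjE exE conjE)
    assume "?p = A + 0 *\<^sub>R v y"
    then show ?thesis using shift[of 0] assms(1) by simp
  next
    fix u assume "0 \<le> u" "u < 2 / c" "?p = A + (- u) *\<^sub>R v y"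
    then show ?thesis using shift[of "- u"] by simp
  next
    fix u assume "0 \<le> u" "u < 2 / c" "?p = A + (2 / c - u) *\<^sub>R v y"
    then show ?thesis using shift[of "2 / c - u"] by simp
  qed
qed

lemma margin_of_le_score:
  assumes "bounded \<A>" "\<forall>A\<in>\<A>. lab A = 1 \<or> lab A = -1" "dual_norm nrm y > 0" "B \<in> \<A>"
  shows "margin_of nrm lab \<A> y b * dual_norm nrm y \<le> lab B * (y \<bullet> B + b)"
proof -
  obtain R where R: "\<And>A. A \<in> \<A> \<Longrightarrow> norm A \<le> R" using assms(1) unfolding bounded_iff by blast
  have "- (norm y * R + \<bar>b\<bar>) / dual_norm nrm y \<le> lab A * (y \<bullet> A + b) / dual_norm nrm y"
    if "A \<in> \<A>" for A
  proof -
    have "\<bar>y \<bullet> A\<bar> \<le> norm y * R"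
      using Cauchy_Schwarz_ineq2[of y A] mult_left_mono[OF R[OF that] norm_ge_zero[of y]] by linarith
    then have "- (norm y * R + \<bar>b\<bar>) \<le> lab A * (y \<bullet> A + b)"
      using assms(2) that by auto
    then show ?thesis using assms(3) by (simp add: divide_right_mono)
  qed
  then have "margin_of nrm lab \<A> y b \<le> lab B * (y \<bullet> B + b) / dual_norm nrm y"
    unfolding margin_of_def by (intro cINF_lower bdd_belowI2 assms(4))
  then show ?thesis using assms(3) by (simp add: field_simps)
qed

lemma inner_nonneg_orthant:
  "x \<in> nonneg_orthant \<Longrightarrow> y \<in> nonneg_orthant \<Longrightarrow> x \<bullet> y \<ge> 0"
  unfolding nonneg_orthant_def inner_vec_def by (auto intro!: sum_nonneg)

lemma convex_cone_nonneg_orthant_times_UNIV: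
  "convex_cone (nonneg_orthant \<times> (UNIV :: real set))"
  unfolding convex_cone_iff nonneg_orthant_def by (auto simp: zero_prod_def)

lemma closed_nonneg_orthant_times_UNIV:
  "closed (nonneg_orthant \<times> (UNIV :: real set))"
  unfolding nonneg_orthant_def by (intro closed_Times closed_positive_orthant closed_UNIV)

lemma closest_point_convex_cone:
  fixes K :: "'a::euclidean_space set"
  assumes "closed K" "convex_cone K" "q \<in> K"
  shows closest_point_convex_cone_inner_ge: "q \<bullet> z \<le> q \<bullet> closest_point K z"
    and closest_point_convex_cone_norm_le: "norm (closest_point K z) \<le> norm z"
proof -
  define p where "p = closest_point K z"
  have cvx: "convex K" using assms(2) unfolding convex_cone_def by simp
  have p: "p \<in> K" unfolding p_def using closest_point_in_set[OF assms(1)] assms(3) by blast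
  have obtuse: "(z - p) \<bullet> (x - p) \<le> 0" if "x \<in> K" for x
    unfolding p_def by (rule closest_point_dot[OF cvx assms(1) that])
  \<comment> \<open>testing with \<open>x = 0\<close> and \<open>x = 2 p\<close> shows that the residual \<open>z - p\<close> is orthogonal to \<open>p\<close>\<close>
  have "(z - p) \<bullet> (0 - p) \<le> 0" "(z - p) \<bullet> (2 *\<^sub>R p - p) \<le> 0"
    using obtuse[OF convex_cone_contains_0[OF assms(2)]] obtuse[OF convex_cone_scaleR[OF assms(2) _ p, of 2]]
    by auto
  then have orth: "(z - p) \<bullet> p = 0" by (simp add: scaleR_2 inner_diff_right)
  have "(z - p) \<bullet> ((q + p) - p) \<le> 0"
    using obtuse convex_cone_add[OF assms(2,3) p] by blast
  then show "q \<bullet> z \<le> q \<bullet> closest_point K z"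
    unfolding p_def[symmetric] by (simp add: inner_diff_left inner_diff_right inner_commute)
  have "norm z ^ 2 = norm p ^ 2 + norm (z - p) ^ 2"
    using orth by (simp add: power2_norm_eq_inner inner_diff_left inner_diff_right inner_commute)
  then show "norm (closest_point K z) \<le> norm z"
    unfolding p_def[symmetric] by (simp add: power2_le_imp_le)
qed

lemma projected_perceptron_mistake_bound:
  fixes q \<xi> :: "nat \<Rightarrow> 'a::euclidean_space" and l :: "nat \<Rightarrow> real"
  assumes K: "closed K" "convex_cone K" "u \<in> K"
    and q0: "q 0 = 0"
    and qSuc: "\<And>n. q (Suc n) = closest_point K (if mis n then q n + l n *\<^sub>R \<xi> n else q n)"
    and label: "\<And>n. n < N \<Longrightarrow> mis n \<Longrightarrow> \<bar>l n\<bar> = 1"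
    and margin: "\<And>n. n < N \<Longrightarrow> mis n \<Longrightarrow> l n * (u \<bullet> \<xi> n) \<ge> 1"
    and wrong: "\<And>n. n < N \<Longrightarrow> mis n \<Longrightarrow> l n * (q n \<bullet> \<xi> n) \<le> 0"
    and radius: "\<And>n. n < N \<Longrightarrow> mis n \<Longrightarrow> norm (\<xi> n) \<le> R"
  shows "real (card {n. n < N \<and> mis n}) \<le> (norm u * R) ^ 2"
proof -
  define M where "M n = real (card {k. k < n \<and> mis k})" for n
  have M_Suc: "M (Suc n) = M n + (if mis n then 1 else 0)" for n
  proof -
    have "{k. k < Suc n \<and> mis k} = (if mis n then insert n else id) {k. k < n \<and> mis k}"
      by (auto simp: less_Suc_eq)
    then show ?thesis unfolding M_def by simp
  qed
  \<comment> \<open>Each mistake raises \<open>u \<bullet> q\<close> by at least 1 and \<open>\<parallel>q\<parallel>\<^sup>2\<close> by at most \<open>R\<^sup>2\<close>; projecting onto \<open>K\<close> only helps.\<close>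
  have invariant: "M n \<le> u \<bullet> q n \<and> norm (q n) ^ 2 \<le> M n * R\<^sup>2" if "n \<le> N" for n
    using that
  proof (induction n)
    case 0
    then show ?case by (simp add: M_def q0)
  next
    case (Suc n)
    then have n: "n < N" and IH: "M n \<le> u \<bullet> q n" "norm (q n) ^ 2 \<le> M n * R\<^sup>2" by auto
    define z where "z = (if mis n then q n + l n *\<^sub>R \<xi> n else q n)"
    have proj: "u \<bullet> z \<le> u \<bullet> q (Suc n)" "norm (q (Suc n)) ^ 2 \<le> norm z ^ 2"
      unfolding qSuc z_def[symmetric]
      by (rule closest_point_convex_cone_inner_ge[OF K],
          rule power_mono[OF closest_point_convex_cone_norm_le[OF K] norm_ge_zero])
    have step: "M (Suc n) \<le> u \<bullet> z \<and> norm z ^ 2 \<le> M (Suc n) * R\<^sup>2"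
    proof (cases "mis n")
      case True
      have "norm z ^ 2 = norm (q n) ^ 2 + 2 * (l n * (q n \<bullet> \<xi> n)) + norm (\<xi> n) ^ 2"
        using dot_norm[of "q n" "l n *\<^sub>R \<xi> n"] label[OF n True] True unfolding z_def by simp
      moreover have "u \<bullet> z = u \<bullet> q n + l n * (u \<bullet> \<xi> n)" unfolding z_def using True by (simp add: inner_add_right)
      ultimately show ?thesis
        using True IH M_Suc[of n] margin[OF n True] wrong[OF n True]
          power_mono[OF radius[OF n True] norm_ge_zero, of 2]
        by (auto simp: algebra_simps)
    qed (use IH z_def M_Suc in auto)
    show ?case using step proj by linarith
  qed
  let ?M = "M N"
  have "?M ^ 2 \<le> (u \<bullet> q N) ^ 2" using invariant[of N] by (simp add: M_def power_mono)
  also have "\<dots> \<le> norm u ^ 2 * norm (q N) ^ 2"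
    using power_mono[OF Cauchy_Schwarz_ineq2[of u "q N"] abs_ge_zero, of 2]
    by (simp add: power_mult_distrib)
  also have "\<dots> \<le> norm u ^ 2 * (?M * R\<^sup>2)" using invariant[of N] by (simp add: mult_left_mono)
  finally have "?M * ?M \<le> ?M * (norm u * R) ^ 2" by (simp add: power2_eq_square algebra_simps)
  moreover have "?M \<ge> 0" by (simp add: M_def)
  ultimately have "?M \<le> (norm u * R) ^ 2" by (smt (verit) mult_le_cancel_left_pos zero_le_power2)
  then show ?thesis by (simp add: M_def)
qed

lemma perceptron_in_cone:
  assumes "closed L" "convex_cone L"
  shows "perceptron nrm c v lab L \<gamma> A t \<in> L"
  using assms closest_point_in_set[OF assms(1) convex_cone_nonempty[OF assms(2)]]
  by (cases t) (simp_all add: Let_def zero_prod_def[symmetric] convex_cone_contains_0)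

lemma normalized_comparator_margin:
  fixes nrm :: "real ^ 'd \<Rightarrow> real"
  assumes "is_norm_fun nrm" "bounded \<A>" "\<forall>A\<in>\<A>. lab A = 1 \<or> lab A = -1"
    and "ys \<noteq> 0" "d = margin_of nrm lab \<A> ys bs" "d > 0"
    and "ys \<in> nonneg_orthant" "y \<in> nonneg_orthant" "\<forall>y\<in>nonneg_orthant. v y \<in> nonneg_orthant"
    and "B \<in> \<A>"
  shows "1 \<le> lab B * (((1 / (d * dual_norm nrm ys)) *\<^sub>R ys, bs / (d * dual_norm nrm ys))
                         \<bullet> (proxy nrm c v lab B y b, 1))"
proof -
  let ?dn = "dual_norm nrm ys"
  have dn: "?dn > 0" using dual_norm_pos[OF assms(1,4)] .
  have "d * ?dn \<le> lab B * (ys \<bullet> B + bs)"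
    using margin_of_le_score[OF assms(2,3) dn assms(10)] assms(5) by (simp add: mult.commute)
  also have "\<dots> \<le> lab B * (ys \<bullet> proxy nrm c v lab B y b + bs)"
    using assms(3,7-10) by (intro proxy_score_mono inner_nonneg_orthant) auto
  finally show ?thesis
    using dn assms(6) by (simp add: field_simps)
qed

lemma proxy_norm_le_SUP:
  fixes nrm :: "real ^ 'd \<Rightarrow> real"
  assumes "is_norm_fun nrm" "is_selection nrm v" "c > 0" "bounded \<A>" "A \<in> \<A>"
  shows "norm (proxy nrm c v lab A y b) \<le> (SUP B\<in>\<A>. norm B) + 2 / c * (SUP y. norm (v y))"
proof -
  have "norm (v y) \<le> (SUP y. norm (v y))" for y
    by (rule cSUP_upper[OF _ selection_norm_bdd_above[OF assms(1,2)]]) simp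
  then have "norm (proxy nrm c v lab A y b) \<le> norm A + 2 / c * (SUP y. norm (v y))"
    by (rule proxy_norm_le[OF assms(3)])
  moreover have "norm A \<le> (SUP B\<in>\<A>. norm B)"
    using assms(4,5)
    by (auto intro!: cSUP_upper bounded_imp_bdd_above simp: bounded_norm_comp[where f = id, simplified])
  ultimately show ?thesis by linarith
qed

lemma strategic_perceptron_mistake_bound:
  fixes nrm :: "real ^ 'd \<Rightarrow> real"
  assumes norm: "is_norm_fun nrm" and sel: "is_selection nrm v" and c: "c > 0"
    and L: "closed L" "convex_cone L" "u \<in> L"
    and labels: "\<And>t. t \<le> T \<Longrightarrow> lab (A t) = 1 \<or> lab (A t) = -1"
    and margin: "\<And>t. t \<le> T \<Longrightarrow>
      1 \<le> lab (A t) * (u \<bullet> (proxy nrm c v lab (A t) (fst (perceptron nrm c v lab L 1 A t))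
                                              (snd (perceptron nrm c v lab L 1 A t)), 1))"
    and radius: "\<And>t. t \<le> T \<Longrightarrow>
      norm (proxy nrm c v lab (A t) (fst (perceptron nrm c v lab L 1 A t))
                                  (snd (perceptron nrm c v lab L 1 A t))) \<le> R"
  shows "real (card (mistake_set nrm c v lab L 1 A T)) \<le> norm u ^ 2 * (R\<^sup>2 + 1)"
proof -
  define q where "q = perceptron nrm c v lab L 1 A"
  define \<xi> where "\<xi> t = (proxy nrm c v lab (A t) (fst (q t)) (snd (q t)), 1 :: real)" for t
  define mis where "mis t = is_mistake nrm c v lab (A t) (q t)" for t
  have "mistake_set nrm c v lab L 1 A T = {t. t < Suc T \<and> mis t}"
    unfolding mistake_set_def mis_def q_def by auto
  moreover have "real (card {t. t < Suc T \<and> mis t}) \<le> (norm u * sqrt (R\<^sup>2 + 1)) ^ 2"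
  proof (rule projected_perceptron_mistake_bound[OF L, where l = "\<lambda>t. lab (A t)"])
    show "q (Suc n) = closest_point L (if mis n then q n + lab (A n) *\<^sub>R \<xi> n else q n)" for n
      unfolding q_def \<xi>_def mis_def by (simp add: Let_def)
    show "lab (A n) * (q n \<bullet> \<xi> n) \<le> 0" if "n < Suc T" "mis n" for n
      using mistake_proxy_score_nonpos[OF norm sel c, where lab = lab and A = "A n" and y = "fst (q n)"
          and b = "snd (q n)"] labels[of n] that
      unfolding mis_def \<xi>_def by (simp add: inner_Pair)
    show "norm (\<xi> n) \<le> sqrt (R\<^sup>2 + 1)" if "n < Suc T" for n
      using radius[of n] norm_ge_zero that
      unfolding \<xi>_def q_def norm_Pair by (auto intro!: power_mono order_trans[OF norm_ge_zero])
  qed (use margin labels in \<open>force simp: q_def \<xi>_def zero_prod_def less_Suc_eq_le\<close>)+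
  ultimately show ?thesis by (simp add: power_mult_distrib)
qed

theorem mainTheorem19:
  fixes nrm :: "real ^ 'd \<Rightarrow> real" and v :: "real ^ 'd \<Rightarrow> real ^ 'd"
    and lab :: "real ^ 'd \<Rightarrow> real" and \<A> :: "(real ^ 'd) set"
    and c :: real and ystar :: "real ^ 'd" and bstar dstar :: real
    and A :: "nat \<Rightarrow> real ^ 'd" and T :: nat
  assumes norm: "is_norm_fun nrm"
    and sel: "is_selection nrm v"
    and c_pos: "c > 0"
    and labels: "\<forall>A\<in>\<A>. lab A = 1 \<or> lab A = -1"
    and ystar_ne: "ystar \<noteq> 0"
    and dstar_def: "dstar = margin_of nrm lab \<A> ystar bstar"
    and dstar_max: "\<forall>y b. y \<noteq> 0 \<longrightarrow> margin_of nrm lab \<A> y b \<le> dstar"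
    and dstar_pos: "dstar > 0"
    and ystar_pos: "ystar \<in> nonneg_orthant"
    and bnd: "bounded \<A>"
    and v_pos: "\<forall>y\<in>nonneg_orthant. v y \<in> nonneg_orthant"
    and agents: "\<forall>t\<le>T. A t \<in> \<A>"
  defines "L \<equiv> nonneg_orthant \<times> (UNIV :: real set)"
    and "D \<equiv> (SUP B\<in>\<A>. norm B)"
    and "Cn \<equiv> (SUP y. norm (v y))"
  defines "Dt \<equiv> D + 2 / c * Cn"
  shows "(\<Sum>t\<in>mistake_set nrm c v lab L 1 A T.
            hinge ((1 / (dstar * dual_norm nrm ystar)) *\<^sub>R ystar, bstar / (dstar * dual_norm nrm ystar))
                  (proxy nrm c v lab (A t) (fst (perceptron nrm c v lab L 1 A t))
                                        (snd (perceptron nrm c v lab L 1 A t)), 1)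
                  (lab (A t))) \<le> 0
       \<and> real (card (mistake_set nrm c v lab L 1 A T))
           \<le> (norm ystar ^ 2 + bstar ^ 2) * (Dt ^ 2 + 1) / (dual_norm nrm ystar ^ 2 * dstar ^ 2)"
proof -
  let ?dn = "dual_norm nrm ystar"
  let ?Lab = "\<lambda>t. lab (A t)"
  define u where "u = ((1 / (dstar * ?dn)) *\<^sub>R ystar, bstar / (dstar * ?dn))"
  have cone: "closed L" "convex_cone L"
    unfolding L_def by (fact closed_nonneg_orthant_times_UNIV convex_cone_nonneg_orthant_times_UNIV)+
  have "u \<in> L"
    unfolding u_def L_def using ystar_pos dstar_pos dual_norm_pos[OF norm ystar_ne]
    by (auto simp: nonneg_orthant_def)
  have margin: "1 \<le> lab (A t) * (u \<bullet> (proxy nrm c v lab (A t) (fst (perceptron nrm c v lab L 1 A t))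
                                                (snd (perceptron nrm c v lab L 1 A t)), 1))"
    if "t \<le> T" for t
    using perceptron_in_cone[OF cone] agents that unfolding u_def L_def
    by (intro normalized_comparator_margin[OF norm bnd labels ystar_ne dstar_def dstar_pos ystar_pos _ v_pos])
      (auto simp: mem_Times_iff)
  have "real (card (mistake_set nrm c v lab L 1 A T)) \<le> norm u ^ 2 * (Dt\<^sup>2 + 1)"
    using agents labels margin unfolding Dt_def D_def Cn_def
    by (intro strategic_perceptron_mistake_bound[OF norm sel c_pos cone \<open>u \<in> L\<close>]
        proxy_norm_le_SUP[OF norm sel c_pos bnd]) auto
  moreover have "norm u ^ 2 = (norm ystar ^ 2 + bstar ^ 2) / (?dn ^ 2 * dstar ^ 2)"
    unfolding u_def norm_Pair by (simp add: power_divide power_mult_distrib add_divide_distrib mult.commute)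
  ultimately show ?thesis
    using margin unfolding hinge_def u_def by (auto intro!: sum_nonpos simp: mistake_set_def)
qed

end
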